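(* Let $\gamma\ge7/5$ and consider the SIEMS5 method ($\mathrm{k}=5$) with coefficients defined as in the context. Then $\sigma_{\mathrm{F}}=1$, $$\sigma_{\mathrm{E}}=\frac{15(16\gamma^4+32\gamma^3-24\gamma^2+8\gamma-1)}{16(15\gamma^4-15\gamma^2+10\gamma-2)},\quad\lambda_{\mathrm{I}}=\frac{15(2\gamma-1)^4}{16(15\gamma^4-15\gamma^2+10\gamma-2)},$$ so that $\mathfrak{I}_{\mathrm{IE}}=\dfrac{(2\gamma-1)^4}{16\gamma^4+32\gamma^3-24\gamma^2+8\gamma-1}$.
   Context: The $\gamma$-parameterized SIEMS-$\mathrm{k}$ method has coefficients $a_j$ ($0\le j\le\mathrm{k}-1$), $b_j$ ($0\le j\le\mathrm{k}$), $c_j$ ($0\le j\le\mathrm{k}-1$) determined by the polynomial identities (in $\zeta$) $\sum_{j=0}^{\mathrm{k}-1}a_j\zeta^{\mathrm{k}-j-1}=\sum_{j=1}^{\mathrm{k}}\frac{f^{(j)}(1)}{j!}(\zeta-1)^{j-1}$ with $f(z)=(\gamma z-\gamma+1)^{\mathrm{k}-1}z\ln z$; $\sum_{j=0}^{\mathrm{k}}b_j\zeta^{\mathrm{k}-j}=\zeta(\gamma\zeta-\gamma+1)^{\mathrm{k}-1}$; $\sum_{j=0}^{\mathrm{k}-1}c_j\zeta^{\mathrm{k}-j-1}=\zeta(\gamma\zeta-\gamma+1)^{\mathrm{k}-1}-\gamma^{\mathrm{k}-1}(\zeta-1)^{\mathrm{k}}$. (For $\mathrm{k}=5$: $(a_0,\dots,a_4)=(\gamma^4+2\gamma^3-\gamma^2+\tfrac{\gamma}{3}-\tfrac1{20},\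 -4\gamma^4-4\gamma^3+7\gamma^2-2\gamma+\tfrac{17}{60},\ 6\gamma^4-9\gamma^2+6\gamma-\tfrac{43}{60},\ -4\gamma^4+4\gamma^3+\gamma^2-\tfrac{10\gamma}{3}+\tfrac{77}{60},\ \gamma^4-2\gamma^3+2\gamma^2-\gamma+\tfrac15)$.) Define $a(\theta)=\sum_j a_je^{\imath j\theta}$, $b(\theta)=\sum_j b_je^{\imath j\theta}$, $c(\theta)=\sum_jc_je^{\imath j\theta}$, $\sigma_{\mathrm{F}}=\max_{\theta\in[0,2\pi)}|1/a(\theta)|$, $\sigma_{\mathrm{E}}=\max_{\theta\in[0,2\pi)}|c(\theta)/a(\theta)|$, $\lambda_{\mathrm{I}}=\min_{\theta\in[0,2\pi)}\Re[b(\theta)/a(\theta)]$, $\mathfrak{I}_{\mathrm{IE}}=\lambda_{\mathrm{I}}/\sigma_{\mathrm{E}}$. *)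

theory Defs
  imports "HOL-Analysis.Analysis" "HOL-Computational_Algebra.Polynomial"
begin

text \<open>The a_j are the explicit values stated in the
paper's context; b_j and c_j are defined by the polynomial identities
  sum_j b_j z^(5-j) = z (g z - g + 1)^4,
  sum_j c_j z^(4-j) = z (g z - g + 1)^4 - g^4 (z - 1)^5.\<close>

definition siems5_a :: "real \<Rightarrow> nat \<Rightarrow> real" where
  "siems5_a g j =
     (if j = 0 then g^4 + 2*g^3 - g^2 + g/3 - 1/20
      else if j = 1 then -4*g^4 - 4*g^3 + 7*g^2 - 2*g + 17/60
      else if j = 2 then 6*g^4 - 9*g^2 + 6*g - 43/60
      else if j = 3 then -4*g^4 + 4*g^3 + g^2 - 10*g/3 + 77/60
      else if j = 4 then g^4 - 2*g^3 + 2*g^2 - g + 1/5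
      else 0)"

definition siems5_bpoly :: "real \<Rightarrow> real poly" where
  "siems5_bpoly g = [:0, 1:] * [:1 - g, g:] ^ 4"

definition siems5_cpoly :: "real \<Rightarrow> real poly" where
  "siems5_cpoly g = siems5_bpoly g - smult (g^4) ([:-1, 1:] ^ 5)"

definition siems5_b :: "real \<Rightarrow> nat \<Rightarrow> real" where
  "siems5_b g j = coeff (siems5_bpoly g) (5 - j)"   (* used for 0 \<le> j \<le> 5 *)

definition siems5_c :: "real \<Rightarrow> nat \<Rightarrow> real" where
  "siems5_c g j = coeff (siems5_cpoly g) (4 - j)"   (* used for 0 \<le> j \<le> 4 *)

definition aS :: "real \<Rightarrow> real \<Rightarrow> complex" where
  "aS g \<theta> = (\<Sum>j\<le>4. complex_of_real (siems5_a g j) * cis (real j * \<theta>))"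

definition bS :: "real \<Rightarrow> real \<Rightarrow> complex" where
  "bS g \<theta> = (\<Sum>j\<le>5. complex_of_real (siems5_b g j) * cis (real j * \<theta>))"

definition cS :: "real \<Rightarrow> real \<Rightarrow> complex" where
  "cS g \<theta> = (\<Sum>j\<le>4. complex_of_real (siems5_c g j) * cis (real j * \<theta>))"

definition sigmaF :: "real \<Rightarrow> real" where
  "sigmaF g = (SUP \<theta>\<in>{0..<2*pi}. norm (1 / aS g \<theta>))"

definition sigmaE :: "real \<Rightarrow> real" where
  "sigmaE g = (SUP \<theta>\<in>{0..<2*pi}. norm (cS g \<theta> / aS g \<theta>))"

definition lambdaI :: "real \<Rightarrow> real" where
  "lambdaI g = (INF \<theta>\<in>{0..<2*pi}. Re (bS g \<theta> / aS g \<theta>))"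

definition IIE :: "real \<Rightarrow> real" where
  "IIE g = lambdaI g / sigmaE g"

end

theory Submission
  imports Defs
begin

text \<open>
Expanding \<open>cis (j \<theta>)\<close> by Chebyshev polynomials, the real part and the imaginary part divided
by \<open>sin \<theta>\<close> of each of \<open>a\<close>, \<open>b\<close>, \<open>c\<close> are polynomials in \<open>x = cos \<theta>\<close>; hence so are
\<open>|a|\<^sup>2\<close>, \<open>|c|\<^sup>2\<close> and \<open>Re (b cnj a)\<close>. Writing \<open>\<sigma>\<^sub>E = 15 N / (16 D)\<close>, the three inequalities
\<open>|a| \<ge> 1\<close>, \<open>16 D |c| \<le> 15 N |a|\<close> and \<open>16 D Re (b cnj a) \<ge> 15 (2\<gamma> - 1)\<^sup>4 |a|\<^sup>2\<close> each
become \<open>(1 \<mp> x) P (1 + x, 1 - x, 5\<gamma> - 7) \<ge> 0\<close> for an explicit polynomial \<open>P\<close> with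
nonnegative coefficients, checked as a polynomial identity. The factor \<open>1 - x\<close> vanishes at
\<open>\<theta> = 0\<close>, where \<open>a = 1\<close>, and \<open>1 + x\<close> at \<open>\<theta> = \<pi>\<close>, where \<open>a\<close>, \<open>b\<close>, \<open>c\<close> are real, so the
extrema are attained there.
\<close>

fun chebyshev_T :: "nat \<Rightarrow> real \<Rightarrow> real" where
  "chebyshev_T 0 x = 1"
| "chebyshev_T (Suc 0) x = x"
| "chebyshev_T (Suc (Suc n)) x = 2 * x * chebyshev_T (Suc n) x - chebyshev_T n x"

fun chebyshev_U :: "nat \<Rightarrow> real \<Rightarrow> real" where
  "chebyshev_U 0 x = 1"
| "chebyshev_U (Suc 0) x = 2 * x"
| "chebyshev_U (Suc (Suc n)) x = 2 * x * chebyshev_U (Suc n) x - chebyshev_U n x"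

lemma cos_add_plus_cos_diff: "cos (x + t) + cos (x - t) = 2 * cos t * cos (x :: real)"
  by (simp add: cos_add cos_diff)

lemma sin_add_plus_sin_diff: "sin (x + t) + sin (x - t) = 2 * cos t * sin (x :: real)"
  by (simp add: sin_add sin_diff)

lemma cos_mult_eq_chebyshev_T: "cos (real n * t) = chebyshev_T n (cos t)"
proof (induction n rule: induct_nat_012)
  case (ge2 n)
  have "cos (real (Suc (Suc n)) * t) = 2 * cos t * cos (real (Suc n) * t) - cos (real n * t)"
    using cos_add_plus_cos_diff[of "real (Suc n) * t" t] by (simp add: algebra_simps)
  then show ?case
    using ge2 by simp
qed simp_all

lemma sin_mult_eq_chebyshev_U: "sin (real (Suc n) * t) = sin t * chebyshev_U n (cos t)"
proof (induction n rule: induct_nat_012)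
  case 1
  show ?case
    using sin_double[of t] by simp
next
  case (ge2 n)
  have "sin (real (Suc (Suc (Suc n))) * t)
      = 2 * cos t * sin (real (Suc (Suc n)) * t) - sin (real (Suc n) * t)"
    using sin_add_plus_sin_diff[of "real (Suc (Suc n)) * t" t] by (simp add: algebra_simps)
  then show ?case
    using ge2 by (simp add: algebra_simps)
qed simp_all

definition cos_sum_poly :: "(nat \<Rightarrow> real) \<Rightarrow> nat \<Rightarrow> real \<Rightarrow> real" where
  "cos_sum_poly p n x = (\<Sum>j\<le>n. p j * chebyshev_T j x)"

definition sin_sum_poly :: "(nat \<Rightarrow> real) \<Rightarrow> nat \<Rightarrow> real \<Rightarrow> real" where
  "sin_sum_poly p n x = (\<Sum>j<n. p (Suc j) * chebyshev_U j x)"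

lemma Re_cis_sum:
  "Re (\<Sum>j\<le>n. complex_of_real (p j) * cis (real j * t)) = cos_sum_poly p n (cos t)"
  by (simp add: cos_sum_poly_def cos_mult_eq_chebyshev_T)

lemma Im_cis_sum:
  "Im (\<Sum>j\<le>n. complex_of_real (p j) * cis (real j * t)) = sin t * sin_sum_poly p n (cos t)"
proof (cases n)
  case (Suc m)
  have "Im (\<Sum>j\<le>n. complex_of_real (p j) * cis (real j * t)) = (\<Sum>j\<le>Suc m. p j * sin (real j * t))"
    by (simp add: Suc)
  also have "\<dots> = (\<Sum>j\<le>m. p (Suc j) * sin (real (Suc j) * t))"
    by (simp only: sum.atMost_Suc_shift) simp
  also have "\<dots> = sin t * sin_sum_poly p n (cos t)"
    by (simp only: sin_mult_eq_chebyshev_U)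
       (simp add: sin_sum_poly_def Suc lessThan_Suc_atMost sum_distrib_left mult_ac)
  finally show ?thesis .
qed (simp add: sin_sum_poly_def)

lemma cos_sum_poly_4:
  "cos_sum_poly p 4 x = p 0 + p 1 * x + p 2 * (2 * x^2 - 1) + p 3 * (4 * x^3 - 3 * x)
     + p 4 * (8 * x^4 - 8 * x^2 + 1)"
  by (simp add: cos_sum_poly_def eval_nat_numeral algebra_simps)

lemma cos_sum_poly_5:
  "cos_sum_poly p 5 x = p 0 + p 1 * x + p 2 * (2 * x^2 - 1) + p 3 * (4 * x^3 - 3 * x)
     + p 4 * (8 * x^4 - 8 * x^2 + 1) + p 5 * (16 * x^5 - 20 * x^3 + 5 * x)"
  by (simp add: cos_sum_poly_def eval_nat_numeral algebra_simps)

lemma sin_sum_poly_4: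
  "sin_sum_poly p 4 x = p 1 + p 2 * (2 * x) + p 3 * (4 * x^2 - 1) + p 4 * (8 * x^3 - 4 * x)"
  by (simp add: sin_sum_poly_def eval_nat_numeral algebra_simps)

lemma sin_sum_poly_5:
  "sin_sum_poly p 5 x = p 1 + p 2 * (2 * x) + p 3 * (4 * x^2 - 1) + p 4 * (8 * x^3 - 4 * x)
     + p 5 * (16 * x^4 - 12 * x^2 + 1)"
  by (simp add: sin_sum_poly_def eval_nat_numeral algebra_simps)

lemma cSUP_eq_maximum:
  fixes f :: "'a \<Rightarrow> 'b :: conditionally_complete_lattice"
  assumes "a \<in> A" and "\<And>x. x \<in> A \<Longrightarrow> f x \<le> f a"
  shows "(SUP x\<in>A. f x) = f a"
  using assms by (intro cSup_eq_maximum) auto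

lemma cINF_eq_minimum:
  fixes f :: "'a \<Rightarrow> 'b :: conditionally_complete_lattice"
  assumes "a \<in> A" and "\<And>x. x \<in> A \<Longrightarrow> f a \<le> f x"
  shows "(INF x\<in>A. f x) = f a"
  using assms by (intro cInf_eq_minimum) auto

lemma siems5_bpoly_eq:
  "siems5_bpoly g = [:0, (1 - g)^4, 4 * g * (1 - g)^3, 6 * g^2 * (1 - g)^2, 4 * g^3 * (1 - g), g^4:]"
  by (rule poly_eq_poly_eq_iff[THEN iffD1], rule ext)
     (simp add: siems5_bpoly_def algebra_simps, algebra)

lemma siems5_cpoly_eq:
  "siems5_cpoly g = [:g^4, (1 - g)^4 - 5 * g^4, 4 * g * (1 - g)^3 + 10 * g^4,
                      6 * g^2 * (1 - g)^2 - 10 * g^4, 4 * g^3 * (1 - g) + 5 * g^4:]"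
  by (rule poly_eq_poly_eq_iff[THEN iffD1], rule ext)
     (simp add: siems5_cpoly_def siems5_bpoly_def algebra_simps, algebra)

lemma siems5_b_eq:
  "siems5_b g 0 = g^4" "siems5_b g 1 = 4 * g^3 * (1 - g)" "siems5_b g 2 = 6 * g^2 * (1 - g)^2"
  "siems5_b g 3 = 4 * g * (1 - g)^3" "siems5_b g 4 = (1 - g)^4" "siems5_b g 5 = 0"
  by (simp_all add: siems5_b_def siems5_bpoly_eq eval_nat_numeral)

lemma siems5_c_eq:
  "siems5_c g 0 = 4 * g^3 * (1 - g) + 5 * g^4" "siems5_c g 1 = 6 * g^2 * (1 - g)^2 - 10 * g^4"
  "siems5_c g 2 = 4 * g * (1 - g)^3 + 10 * g^4" "siems5_c g 3 = (1 - g)^4 - 5 * g^4"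
  "siems5_c g 4 = g^4"
  by (simp_all add: siems5_c_def siems5_cpoly_eq eval_nat_numeral)

definition siems5_a_re :: "real \<Rightarrow> real \<Rightarrow> real" where
  "siems5_a_re c g =
     (26 - 200 * g + 300 * g^2 - 120 * g^4)
   + (-107 + 240 * g + 120 * g^2 - 480 * g^3 + 240 * g^4) * c
   + (-91 + 600 * g - 1020 * g^2 + 480 * g^3 + 120 * g^4) * c^2
   + (154 - 400 * g + 120 * g^2 + 480 * g^3 - 480 * g^4) * c^3
   + (48 - 240 * g + 480 * g^2 - 480 * g^3 + 240 * g^4) * c^4"

definition siems5_a_im :: "real \<Rightarrow> real \<Rightarrow> real" where
  "siems5_a_im c g =
     (-30 + 40 * g + 180 * g^2 - 240 * g^3)
   + (-67 + 480 * g - 780 * g^2 + 240 * g^3 + 240 * g^4) * c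
   + (154 - 400 * g + 120 * g^2 + 480 * g^3 - 480 * g^4) * c^2
   + (48 - 240 * g + 480 * g^2 - 480 * g^3 + 240 * g^4) * c^3"

lemma siems5_a_cos_sum_poly: "30 * cos_sum_poly (siems5_a g) 4 c = siems5_a_re c g"
  by (simp add: cos_sum_poly_4 siems5_a_def siems5_a_re_def field_simps)

lemma siems5_a_sin_sum_poly: "30 * sin_sum_poly (siems5_a g) 4 c = siems5_a_im c g"
  by (simp add: sin_sum_poly_4 siems5_a_def siems5_a_im_def field_simps)

definition siems5_N :: "real \<Rightarrow> real" where
  "siems5_N g = 16 * g^4 + 32 * g^3 - 24 * g^2 + 8 * g - 1"

definition siems5_D :: "real \<Rightarrow> real" where
  "siems5_D g = 15 * g^4 - 15 * g^2 + 10 * g - 2"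

lemma siems5_N_pos:
  assumes "1 \<le> g"
  shows "0 < siems5_N g"
proof -
  have "0 \<le> 16 * g^4 + 8 * g^2 * (4 * g - 3)"
    using assms by simp
  moreover have "siems5_N g = 16 * g^4 + 8 * g^2 * (4 * g - 3) + (8 * g - 1)"
    unfolding siems5_N_def by algebra
  ultimately show ?thesis
    using assms by linarith
qed

lemma siems5_D_pos:
  assumes "1 \<le> g"
  shows "0 < siems5_D g"
proof -
  have "0 \<le> 15 * g^2 * (g^2 - 1)"
    using assms by (simp add: one_le_power)
  moreover have "siems5_D g = 15 * g^2 * (g^2 - 1) + (10 * g - 2)"
    unfolding siems5_D_def by algebra
  ultimately show ?thesis
    using assms by linarith
qed

lemma siems5_aS_0: "aS g 0 = 1"
  unfolding complex_eq_iff aS_def Re_cis_sum Im_cis_sum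
  by (simp add: cos_sum_poly_4 siems5_a_def)

lemma siems5_aS_pi: "aS g pi = complex_of_real (16 * siems5_D g / 15)"
  unfolding complex_eq_iff aS_def Re_cis_sum Im_cis_sum
  by (simp add: cos_sum_poly_4 siems5_a_def siems5_D_def field_simps)

lemma siems5_bS_pi: "bS g pi = complex_of_real ((2 * g - 1)^4)"
  unfolding complex_eq_iff bS_def Re_cis_sum Im_cis_sum cos_sum_poly_5 siems5_b_eq
  by simp algebra

lemma siems5_cS_pi: "cS g pi = complex_of_real (siems5_N g)"
  unfolding complex_eq_iff cS_def Re_cis_sum Im_cis_sum cos_sum_poly_4 siems5_c_eq
  by (simp add: siems5_N_def) algebra

lemma siems5_Re_aS: "30 * Re (aS g t) = siems5_a_re (cos t) g"
  unfolding aS_def Re_cis_sum siems5_a_cos_sum_poly ..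

lemma siems5_Im_aS: "30 * Im (aS g t) = sin t * siems5_a_im (cos t) g"
  unfolding aS_def Im_cis_sum siems5_a_sin_sum_poly[symmetric] by simp

lemma siems5_norm_aS_sq:
  "900 * (cmod (aS g t))\<^sup>2
     = (siems5_a_re (cos t) g)\<^sup>2 + (1 - (cos t)\<^sup>2) * (siems5_a_im (cos t) g)\<^sup>2"
proof -
  have "900 * (cmod (aS g t))\<^sup>2 = (30 * Re (aS g t))\<^sup>2 + (30 * Im (aS g t))\<^sup>2"
    by (simp add: cmod_power2 power_mult_distrib)
  then show ?thesis
    unfolding siems5_Re_aS siems5_Im_aS by (simp add: power_mult_distrib sin_squared_eq)
qed

lemma siems5_norm_cS_sq:
  "(cmod (cS g t))\<^sup>2
     = (cos_sum_poly (siems5_c g) 4 (cos t))\<^sup>2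
       + (1 - (cos t)\<^sup>2) * (sin_sum_poly (siems5_c g) 4 (cos t))\<^sup>2"
  unfolding cmod_power2 cS_def Re_cis_sum Im_cis_sum
  by (simp add: power_mult_distrib sin_squared_eq)

lemma siems5_Re_bS_div_aS:
  "900 * (cmod (aS g t))\<^sup>2 * Re (bS g t / aS g t)
     = 30 * (cos_sum_poly (siems5_b g) 5 (cos t) * siems5_a_re (cos t) g
             + (1 - (cos t)\<^sup>2) * sin_sum_poly (siems5_b g) 5 (cos t) * siems5_a_im (cos t) g)"
proof -
  have "(cmod (aS g t))\<^sup>2 * Re (bS g t / aS g t)
      = Re (bS g t) * Re (aS g t) + Im (bS g t) * Im (aS g t)"
    by (cases "aS g t = 0") (simp_all add: Re_divide')
  then have "900 * (cmod (aS g t))\<^sup>2 * Re (bS g t / aS g t)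
      = 30 * (Re (bS g t) * (30 * Re (aS g t)) + Im (bS g t) * (30 * Im (aS g t)))"
    by (simp add: algebra_simps)
  moreover have "Re (bS g t) = cos_sum_poly (siems5_b g) 5 (cos t)"
    and "Im (bS g t) = sin t * sin_sum_poly (siems5_b g) 5 (cos t)"
    unfolding bS_def Re_cis_sum Im_cis_sum by (rule refl)+
  ultimately show ?thesis
    using sin_squared_eq[of t] unfolding siems5_Re_aS siems5_Im_aS by algebra
qed

definition cert_norm_a :: "real \<Rightarrow> real \<Rightarrow> real \<Rightarrow> real" where
  "cert_norm_a p q H =
     q^8 * (90557111106 + 119510974464 * H + 68493996032 * H^2 + 22209073152 * H^3 +
         4438801920 * H^4 + 557211648 * H^5 + 42642432 * H^6 + 1806336 * H^7 + 32256 * H^8)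
   + 8 * p * q^7 * (55070919610 + 73739890140 * H + 42684592020 * H^2 + 13927668720 * H^3 +
         2791954200 * H^4 + 350474880 * H^5 + 26752320 * H^6 + 1128960 * H^7 + 20160 * H^8)
   + 28 * p^2 * q^6 * (30267494520 + 41420753880 * H + 24317956440 * H^2 + 8003811840 * H^3 +
         1610846400 * H^4 + 202172160 * H^5 + 15373440 * H^6 + 645120 * H^7 + 11520 * H^8)
   + 56 * p^3 * q^5 * (14265985260 + 20237255940 * H + 12137218220 * H^2 + 4045195920 * H^3 +
         818608200 * H^4 + 102670080 * H^5 + 7758720 * H^6 + 322560 * H^7 + 5760 * H^8)
   + 70 * p^4 * q^4 * (5185541254 + 7873086576 * H + 4885506288 * H^2 + 1659514368 * H^3 +
         338369280 * H^4 + 42335232 * H^5 + 3161088 * H^6 + 129024 * H^7 + 2304 * H^8)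
   + 56 * p^5 * q^3 * (1145311926 + 2011936044 * H + 1305949572 * H^2 + 454460592 * H^3 +
         93259320 * H^4 + 11534208 * H^5 + 833472 * H^6 + 32256 * H^7 + 576 * H^8)
   + 28 * p^6 * q^2 * (264446700 + 337494600 * H + 141677000 * H^2 + 37728000 * H^3 +
         6408000 * H^4 + 633600 * H^5 + 28800 * H^6)
   + 8 * p^7 * q * (662095000 + 533452500 * H + 135817500 * H^2 + 17010000 * H^3 + 945000 * H^4)
   + p^8 * (457406250 + 283500000 * H + 31500000 * H^2)"

definition cert_sigmaE :: "real \<Rightarrow> real \<Rightarrow> real \<Rightarrow> real" where
  "cert_sigmaE p q H =
     q^3 * (14766936936736194 + 69975339019177536 * H + 105549779251775808 * H^2 +
         84762662086798848 * H^3 + 43135393033330560 * H^4 + 15094275910331904 * H^5 +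
         3788539357326336 * H^6 + 695935501498368 * H^7 + 93982996505088 * H^8 +
         9238071214080 * H^9 + 643060924416 * H^10 + 30009360384 * H^11 + 840056832 * H^12 +
         10616832 * H^13)
   + 3 * p * q^2 * (9662456658764490 + 18402024800817120 * H + 15864648612856800 * H^2 +
         8167739001139200 * H^3 + 2788003206691200 * H^4 + 661831288419840 * H^5 +
         111343341534720 * H^6 + 13252689254400 * H^7 + 1091247705600 * H^8 + 59024793600 * H^9 +
         1879695360 * H^10 + 26542080 * H^11)
   + 3 * p^2 * q * (1900906328090250 + 2805881673888000 * H + 1830091452696000 * H^2 +
         691341362352000 * H^3 + 166421681544000 * H^4 + 26417714112000 * H^5 +
         2757518784000 * H^6 + 181801728000 * H^7 + 6831936000 * H^8 + 110592000 * H^9)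
   + p^3 * (427165202981250 + 445724291700000 * H + 197931552300000 * H^2 + 48349494000000 * H^3 +
         6988977000000 * H^4 + 594561600000 * H^5 + 27345600000 * H^6 + 518400000 * H^7)"

definition cert_lambdaI :: "real \<Rightarrow> real \<Rightarrow> real \<Rightarrow> real" where
  "cert_lambdaI p q H =
     q^3 * (3595913514 + 53158994928 * H + 77917633776 * H^2 + 52173456192 * H^3 +
         20249852544 * H^4 + 4953917952 * H^5 + 780847104 * H^6 + 77395968 * H^7 + 4409856 * H^8 +
         110592 * H^9)
   + 3 * p * q^2 * (12802145490 + 19342975440 * H + 12512092560 * H^2 + 4492820800 * H^3 +
         967566400 * H^4 + 125022720 * H^5 + 8977920 * H^6 + 276480 * H^7)
   + 3 * p^2 * q * (2828015250 + 2952550000 * H + 1234590000 * H^2 + 258840000 * H^3 +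
         27240000 * H^4 + 1152000 * H^5)
   + p^3 * (683606250 + 400050000 * H + 79650000 * H^2 + 5400000 * H^3)"

lemma cert_norm_a_nonneg: "0 \<le> p \<Longrightarrow> 0 \<le> q \<Longrightarrow> 0 \<le> H \<Longrightarrow> 0 \<le> cert_norm_a p q H"
  unfolding cert_norm_a_def by (intro add_nonneg_nonneg mult_nonneg_nonneg zero_le_power; simp)

lemma cert_sigmaE_nonneg: "0 \<le> p \<Longrightarrow> 0 \<le> q \<Longrightarrow> 0 \<le> H \<Longrightarrow> 0 \<le> cert_sigmaE p q H"
  unfolding cert_sigmaE_def by (intro add_nonneg_nonneg mult_nonneg_nonneg zero_le_power; simp)

lemma cert_lambdaI_nonneg: "0 \<le> p \<Longrightarrow> 0 \<le> q \<Longrightarrow> 0 \<le> H \<Longrightarrow> 0 \<le> cert_lambdaI p q H"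
  unfolding cert_lambdaI_def by (intro add_nonneg_nonneg mult_nonneg_nonneg zero_le_power; simp)

lemma siems5_norm_aS_poly_ge:
  assumes "7/5 \<le> g" "-1 \<le> c" "c \<le> 1"
  shows "900 \<le> (siems5_a_re c g)\<^sup>2 + (1 - c\<^sup>2) * (siems5_a_im c g)\<^sup>2"
proof -
  have "0 \<le> (1 - c) * cert_norm_a (1 + c) (1 - c) (5 * g - 7)"
    using assms by (intro mult_nonneg_nonneg cert_norm_a_nonneg) auto
  also have "\<dots> = 28000000 * ((siems5_a_re c g)\<^sup>2 + (1 - c\<^sup>2) * (siems5_a_im c g)\<^sup>2 - 900)"
    unfolding siems5_a_re_def siems5_a_im_def cert_norm_a_def by algebra
  finally show ?thesis
    by simp
qed

lemma siems5_sigmaE_poly_ineq: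
  assumes "7/5 \<le> g" "-1 \<le> c" "c \<le> 1"
  shows "230400 * (siems5_D g)\<^sup>2 * ((cos_sum_poly (siems5_c g) 4 c)\<^sup>2
                                   + (1 - c\<^sup>2) * (sin_sum_poly (siems5_c g) 4 c)\<^sup>2)
    \<le> 225 * (siems5_N g)\<^sup>2 * ((siems5_a_re c g)\<^sup>2 + (1 - c\<^sup>2) * (siems5_a_im c g)\<^sup>2)"
proof -
  have "0 \<le> (1 + c) * cert_sigmaE (1 + c) (1 - c) (5 * g - 7)"
    using assms by (intro mult_nonneg_nonneg cert_sigmaE_nonneg) auto
  also have "\<dots> = 3125000 *
      (225 * (siems5_N g)\<^sup>2 * ((siems5_a_re c g)\<^sup>2 + (1 - c\<^sup>2) * (siems5_a_im c g)\<^sup>2)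
       - 230400 * (siems5_D g)\<^sup>2 * ((cos_sum_poly (siems5_c g) 4 c)\<^sup>2
                                     + (1 - c\<^sup>2) * (sin_sum_poly (siems5_c g) 4 c)\<^sup>2))"
    unfolding siems5_a_re_def siems5_a_im_def siems5_N_def siems5_D_def cert_sigmaE_def
      cos_sum_poly_4 sin_sum_poly_4 siems5_c_eq
    by algebra
  finally show ?thesis
    by simp
qed

lemma siems5_lambdaI_poly_ineq:
  assumes "7/5 \<le> g" "-1 \<le> c" "c \<le> 1"
  shows "15 * (2 * g - 1)^4 * ((siems5_a_re c g)\<^sup>2 + (1 - c\<^sup>2) * (siems5_a_im c g)\<^sup>2)
    \<le> 480 * siems5_D g * (cos_sum_poly (siems5_b g) 5 c * siems5_a_re c g
                          + (1 - c\<^sup>2) * sin_sum_poly (siems5_b g) 5 c * siems5_a_im c g)"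
proof -
  have "0 \<le> (1 + c) * cert_lambdaI (1 + c) (1 - c) (5 * g - 7)"
    using assms by (intro mult_nonneg_nonneg cert_lambdaI_nonneg) auto
  also have "\<dots> = 25000 *
      (480 * siems5_D g * (cos_sum_poly (siems5_b g) 5 c * siems5_a_re c g
                           + (1 - c\<^sup>2) * sin_sum_poly (siems5_b g) 5 c * siems5_a_im c g)
       - 15 * (2 * g - 1)^4 * ((siems5_a_re c g)\<^sup>2 + (1 - c\<^sup>2) * (siems5_a_im c g)\<^sup>2))"
    unfolding siems5_a_re_def siems5_a_im_def siems5_D_def cert_lambdaI_def
      cos_sum_poly_5 sin_sum_poly_5 siems5_b_eq
    by algebra
  finally show ?thesis
    by simp
qed

lemma siems5_norm_aS_ge_1:
  assumes "7/5 \<le> g"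
  shows "1 \<le> cmod (aS g t)"
proof (rule power2_le_imp_le)
  show "1\<^sup>2 \<le> (cmod (aS g t))\<^sup>2"
    using siems5_norm_aS_poly_ge[OF assms cos_ge_minus_one[of t] cos_le_one[of t]]
    by (simp add: siems5_norm_aS_sq[symmetric])
qed simp

lemma siems5_norm_cS_div_aS_le:
  assumes "7/5 \<le> g"
  shows "cmod (cS g t / aS g t) \<le> 15 * siems5_N g / (16 * siems5_D g)"
proof -
  have D: "0 < siems5_D g" and N: "0 < siems5_N g" and A: "1 \<le> cmod (aS g t)"
    using assms siems5_D_pos siems5_N_pos siems5_norm_aS_ge_1 by auto
  have "(16 * siems5_D g * cmod (cS g t))\<^sup>2 \<le> (15 * siems5_N g * cmod (aS g t))\<^sup>2"
    using siems5_sigmaE_poly_ineq[OF assms cos_ge_minus_one[of t] cos_le_one[of t]]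
    unfolding siems5_norm_cS_sq[symmetric] siems5_norm_aS_sq[symmetric]
    by (simp add: power_mult_distrib)
  then have "16 * siems5_D g * cmod (cS g t) \<le> 15 * siems5_N g * cmod (aS g t)"
    by (rule power2_le_imp_le) (use N A in simp)
  moreover have "0 < cmod (aS g t)"
    using A by linarith
  ultimately show ?thesis
    using D by (simp add: norm_divide field_simps)
qed

lemma siems5_Re_bS_div_aS_ge:
  assumes "7/5 \<le> g"
  shows "15 * (2 * g - 1)^4 / (16 * siems5_D g) \<le> Re (bS g t / aS g t)"
proof -
  have D: "0 < siems5_D g" and A: "0 < 900 * (cmod (aS g t))\<^sup>2"
    using assms siems5_D_pos siems5_norm_aS_ge_1[OF assms, of t] by auto
  have "15 * (2 * g - 1)^4 * (900 * (cmod (aS g t))\<^sup>2)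
      \<le> 480 * siems5_D g * (cos_sum_poly (siems5_b g) 5 (cos t) * siems5_a_re (cos t) g
          + (1 - (cos t)\<^sup>2) * sin_sum_poly (siems5_b g) 5 (cos t) * siems5_a_im (cos t) g)"
    using siems5_lambdaI_poly_ineq[OF assms cos_ge_minus_one[of t] cos_le_one[of t]]
    unfolding siems5_norm_aS_sq .
  also have "\<dots> = 16 * siems5_D g * Re (bS g t / aS g t) * (900 * (cmod (aS g t))\<^sup>2)"
    using siems5_Re_bS_div_aS[of g t] by algebra
  finally have "15 * (2 * g - 1)^4 \<le> 16 * siems5_D g * Re (bS g t / aS g t)"
    using A by (rule mult_right_le_imp_le)
  then show ?thesis
    using D by (simp add: field_simps)
qed

lemma siems5_norm_cS_div_aS_pi:
  assumes "1 \<le> g"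
  shows "cmod (cS g pi / aS g pi) = 15 * siems5_N g / (16 * siems5_D g)"
  using siems5_N_pos[OF assms] siems5_D_pos[OF assms]
  by (simp add: siems5_aS_pi siems5_cS_pi norm_divide)

lemma siems5_Re_bS_div_aS_pi: "Re (bS g pi / aS g pi) = 15 * (2 * g - 1)^4 / (16 * siems5_D g)"
  by (simp add: siems5_aS_pi siems5_bS_pi)

theorem mainTheorem12:
  fixes \<gamma> :: real
  assumes "\<gamma> \<ge> 7/5"
  shows "sigmaF \<gamma> = 1
    \<and> sigmaE \<gamma> = 15 * (16*\<gamma>^4 + 32*\<gamma>^3 - 24*\<gamma>^2 + 8*\<gamma> - 1)
                   / (16 * (15*\<gamma>^4 - 15*\<gamma>^2 + 10*\<gamma> - 2))
    \<and> lambdaI \<gamma> = 15 * (2*\<gamma> - 1)^4 / (16 * (15*\<gamma>^4 - 15*\<gamma>^2 + 10*\<gamma> - 2))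
    \<and> IIE \<gamma> = (2*\<gamma> - 1)^4 / (16*\<gamma>^4 + 32*\<gamma>^3 - 24*\<gamma>^2 + 8*\<gamma> - 1)"
proof -
  have "1 \<le> \<gamma>" and zero: "0 \<in> {0..<2 * pi}" and pi: "pi \<in> {0..<2 * pi}"
    using assms by auto
  have F: "sigmaF \<gamma> = cmod (1 / aS \<gamma> 0)"
    unfolding sigmaF_def using siems5_norm_aS_ge_1[OF assms]
    by (intro cSUP_eq_maximum[OF zero]) (auto simp: siems5_aS_0 norm_divide divide_le_eq)
  have E: "sigmaE \<gamma> = cmod (cS \<gamma> pi / aS \<gamma> pi)"
    unfolding sigmaE_def using siems5_norm_cS_div_aS_le[OF assms]
    by (intro cSUP_eq_maximum[OF pi]) (simp add: siems5_norm_cS_div_aS_pi[OF \<open>1 \<le> \<gamma>\<close>])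
  have L: "lambdaI \<gamma> = Re (bS \<gamma> pi / aS \<gamma> pi)"
    unfolding lambdaI_def using siems5_Re_bS_div_aS_ge[OF assms]
    by (intro cINF_eq_minimum[OF pi]) (simp add: siems5_Re_bS_div_aS_pi)
  have "0 < siems5_N \<gamma>" and "0 < siems5_D \<gamma>"
    using \<open>1 \<le> \<gamma>\<close> siems5_N_pos siems5_D_pos by auto
  then have I: "IIE \<gamma> = (2 * \<gamma> - 1)^4 / siems5_N \<gamma>"
    unfolding IIE_def E L siems5_norm_cS_div_aS_pi[OF \<open>1 \<le> \<gamma>\<close>] siems5_Re_bS_div_aS_pi
    by (simp add: field_simps)
  show ?thesis
    using F E L I unfolding siems5_aS_0 siems5_norm_cS_div_aS_pi[OF \<open>1 \<le> \<gamma>\<close>]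
      siems5_Re_bS_div_aS_pi siems5_N_def siems5_D_def
    by simp
qed

end
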